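(* (Backward transformation compatible with substitutions.) If $\Delta;\Gamma,x{:}A\vdash M:B$ and $\Delta;\Gamma\vdash N:A$ in DCC, then $(M[N/x])^\circ=M^\circ[N^\circ/x]$.
   Context: DCC: expressions $x\mid U_i\mid\Pi x{:}A.B\mid L@M\mid\ell_i\{\overline M\}$ (label names $\ell_i$, lists $\overline M=M_1,\dots,M_n$); type contexts $\Gamma$; label contexts $\Delta::=\cdot\mid\Delta,\ell_i(\{\overline x{:}\overline A\},x{:}A\mapsto L:B)$; substitution standard with $\ell\{\overline M\}[N/x]=\ell\{\overline{M[N/x]}\}$; typing $\Delta;\Gamma\vdash M:A$ by the CC-style rules for variables, universes ($U_i:U_{i+1}$), $\Pi$, application $M@N:B[N/x]$ and conversion, plus: if $\Delta;\Gamma$ is well formed, $\ell(\{\overline x{:}\overline A\},x{:}A\mapsto M:B)\in\Delta$, $|\overline M|=|\overline x|$ and $\Delta;\Gamma\vdash M_k:A_k[M_1/x_1,\dots,M_{k-1}/x_{k-1}]$ for all $k$, then $\Delta;\Gamma\vdash\ell\{\overline M\}:\Pi x{:}A[\overline M/\overline x].B[\overline M/\overline x]$; well-formed label entries satisfy $\Delta;\overline x{:}\overline A,x{:}A\vdash L:B$. Backward transformation to CC (expressions $x\mid U_i\mid\Pi x{:}A.B\mid L\,M\mid\lambda x{:}A.M$), defined on well-typed DCC terms relative to $\Delta$: $x^\circ=x$, $U_i^\circ=U_i$, $(\Pi x{:}A.B)^\circ=\Pi x{:}A^\circ.B^\circ$, $(M@N)^\circ=M^\circ\,N^\circ$, and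 $(\ell\{\overline M\})^\circ=\lambda x{:}A^\circ[\overline{M^\circ}/\overline x].\,L^\circ[\overline{M^\circ}/\overline x]$ where $\ell(\{\overline x{:}\overline A\},x{:}A\mapsto L:B)\in\Delta$; it acts pointwise on type contexts. *)

theory Defs
  imports Main
begin

datatype dterm =
    DVar nat
  | DU nat
  | DPi dterm dterm
  | DApp dterm dterm
  | DLab nat "dterm list"

datatype cterm =
    CVar nat
  | CU nat
  | CPi cterm cterm
  | CApp cterm cterm
  | CLam cterm cterm

fun dlift :: "nat \<Rightarrow> dterm \<Rightarrow> dterm" where
  "dlift k (DVar i) = DVar (if i < k then i else Suc i)"
| "dlift k (DU n) = DU n"
| "dlift k (DPi A B) = DPi (dlift k A) (dlift (Suc k) B)"
| "dlift k (DApp M N) = DApp (dlift k M) (dlift k N)"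
| "dlift k (DLab l Ms) = DLab l (map (dlift k) Ms)"

definition dup :: "(nat \<Rightarrow> dterm) \<Rightarrow> nat \<Rightarrow> dterm" where
  "dup \<sigma> i = (case i of 0 \<Rightarrow> DVar 0 | Suc j \<Rightarrow> dlift 0 (\<sigma> j))"

fun dpsubst :: "(nat \<Rightarrow> dterm) \<Rightarrow> dterm \<Rightarrow> dterm" where
  "dpsubst \<sigma> (DVar i) = \<sigma> i"
| "dpsubst \<sigma> (DU n) = DU n"
| "dpsubst \<sigma> (DPi A B) = DPi (dpsubst \<sigma> A) (dpsubst (dup \<sigma>) B)"
| "dpsubst \<sigma> (DApp M N) = DApp (dpsubst \<sigma> M) (dpsubst \<sigma> N)"
| "dpsubst \<sigma> (DLab l Ms) = DLab l (map (dpsubst \<sigma>) Ms)"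

definition dsubst0 :: "dterm \<Rightarrow> dterm \<Rightarrow> dterm" where
  "dsubst0 M N = dpsubst (\<lambda>i. case i of 0 \<Rightarrow> N | Suc j \<Rightarrow> DVar j) M"

text \<open>Instantiation [M_1..M_n / x_1..x_n] of the parameters of a label; in the
  parameter context x_1..x_n the variable x_n has index 0.\<close>
definition dinst :: "dterm list \<Rightarrow> nat \<Rightarrow> dterm" where
  "dinst Ms i = (if i < length Ms then rev Ms ! i else DVar (i - length Ms))"

fun clift :: "nat \<Rightarrow> cterm \<Rightarrow> cterm" where
  "clift k (CVar i) = CVar (if i < k then i else Suc i)"
| "clift k (CU n) = CU n"
| "clift k (CPi A B) = CPi (clift k A) (clift (Suc k) B)"
| "clift k (CApp M N) = CApp (clift k M) (clift k N)"
| "clift k (CLam A M) = CLam (clift k A) (clift (Suc k) M)"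

definition cup :: "(nat \<Rightarrow> cterm) \<Rightarrow> nat \<Rightarrow> cterm" where
  "cup \<sigma> i = (case i of 0 \<Rightarrow> CVar 0 | Suc j \<Rightarrow> clift 0 (\<sigma> j))"

fun cpsubst :: "(nat \<Rightarrow> cterm) \<Rightarrow> cterm \<Rightarrow> cterm" where
  "cpsubst \<sigma> (CVar i) = \<sigma> i"
| "cpsubst \<sigma> (CU n) = CU n"
| "cpsubst \<sigma> (CPi A B) = CPi (cpsubst \<sigma> A) (cpsubst (cup \<sigma>) B)"
| "cpsubst \<sigma> (CApp M N) = CApp (cpsubst \<sigma> M) (cpsubst \<sigma> N)"
| "cpsubst \<sigma> (CLam A M) = CLam (cpsubst \<sigma> A) (cpsubst (cup \<sigma>) M)"

definition csubst0 :: "cterm \<Rightarrow> cterm \<Rightarrow> cterm" where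
  "csubst0 M N = cpsubst (\<lambda>i. case i of 0 \<Rightarrow> N | Suc j \<Rightarrow> CVar j) M"

definition cinst :: "cterm list \<Rightarrow> nat \<Rightarrow> cterm" where
  "cinst Ms i = (if i < length Ms then rev Ms ! i else CVar (i - length Ms))"

text \<open>A label entry l({x_1:A_1,...,x_n:A_n}, x:A |-> L : B) is
  (l, [A_1,...,A_n], A, L, B).  A_k lives in the context x_1..x_{k-1};
  A in x_1..x_n; L and B in x_1..x_n,x.  Label contexts are lists whose head
  is the most recently added entry; type contexts likewise (head = index 0).\<close>

type_synonym lentry = "nat \<times> dterm list \<times> dterm \<times> dterm \<times> dterm"
type_synonym lctx = "lentry list"
type_synonym tctx = "dterm list"

definition labels :: "lctx \<Rightarrow> nat set" where
  "labels \<Delta> = fst ` set \<Delta>"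

inductive dstep :: "lctx \<Rightarrow> dterm \<Rightarrow> dterm \<Rightarrow> bool" for \<Delta> where
  beta: "(l, As, A, L, B) \<in> set \<Delta> \<Longrightarrow> length Ms = length As \<Longrightarrow>
     dstep \<Delta> (DApp (DLab l Ms) N)
       (dpsubst (\<lambda>i. case i of 0 \<Rightarrow> N | Suc j \<Rightarrow> dinst Ms j) L)"
| pi1: "dstep \<Delta> A A' \<Longrightarrow> dstep \<Delta> (DPi A B) (DPi A' B)"
| pi2: "dstep \<Delta> B B' \<Longrightarrow> dstep \<Delta> (DPi A B) (DPi A B')"
| app1: "dstep \<Delta> M M' \<Longrightarrow> dstep \<Delta> (DApp M N) (DApp M' N)"
| app2: "dstep \<Delta> N N' \<Longrightarrow> dstep \<Delta> (DApp M N) (DApp M N')"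
| lab: "dstep \<Delta> M M' \<Longrightarrow> dstep \<Delta> (DLab l (xs @ M # ys)) (DLab l (xs @ M' # ys))"

definition dconv :: "lctx \<Rightarrow> dterm \<Rightarrow> dterm \<Rightarrow> bool" where
  "dconv \<Delta> = equivclp (dstep \<Delta>)"

inductive wfL :: "lctx \<Rightarrow> bool"
  and wfC :: "lctx \<Rightarrow> tctx \<Rightarrow> bool"
  and hastype :: "lctx \<Rightarrow> tctx \<Rightarrow> dterm \<Rightarrow> dterm \<Rightarrow> bool"
where
  wfL_nil: "wfL []"
| wfL_cons: "wfL \<Delta> \<Longrightarrow> l \<notin> labels \<Delta> \<Longrightarrow> hastype \<Delta> (A # rev As) L B \<Longrightarrow>
     wfL ((l, As, A, L, B) # \<Delta>)"
| wfC_nil: "wfL \<Delta> \<Longrightarrow> wfC \<Delta> []"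
| wfC_cons: "hastype \<Delta> \<Gamma> A (DU i) \<Longrightarrow> wfC \<Delta> (A # \<Gamma>)"
| t_var: "wfC \<Delta> \<Gamma> \<Longrightarrow> i < length \<Gamma> \<Longrightarrow> hastype \<Delta> \<Gamma> (DVar i) ((dlift 0 ^^ Suc i) (\<Gamma> ! i))"
| t_univ: "wfC \<Delta> \<Gamma> \<Longrightarrow> hastype \<Delta> \<Gamma> (DU i) (DU (Suc i))"
| t_pi: "hastype \<Delta> \<Gamma> A (DU i) \<Longrightarrow> hastype \<Delta> (A # \<Gamma>) B (DU j) \<Longrightarrow>
     hastype \<Delta> \<Gamma> (DPi A B) (DU (max i j))"
| t_app: "hastype \<Delta> \<Gamma> M (DPi A B) \<Longrightarrow> hastype \<Delta> \<Gamma> N A \<Longrightarrow> hastype \<Delta> \<Gamma> (DApp M N) (dsubst0 B N)"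
| t_conv: "hastype \<Delta> \<Gamma> M A \<Longrightarrow> hastype \<Delta> \<Gamma> B (DU i) \<Longrightarrow> dconv \<Delta> A B \<Longrightarrow> hastype \<Delta> \<Gamma> M B"
| t_lab: "wfC \<Delta> \<Gamma> \<Longrightarrow> (l, As, A, L, B) \<in> set \<Delta> \<Longrightarrow> length Ms = length As \<Longrightarrow>
     (\<forall>k < length Ms. hastype \<Delta> \<Gamma> (Ms ! k) (dpsubst (dinst (take k Ms)) (As ! k))) \<Longrightarrow>
     hastype \<Delta> \<Gamma> (DLab l Ms) (DPi (dpsubst (dinst Ms) A) (dpsubst (dup (dinst Ms)) B))"

fun btr :: "(nat \<Rightarrow> cterm list \<Rightarrow> cterm) \<Rightarrow> dterm \<Rightarrow> cterm" where
  "btr h (DVar i) = CVar i"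
| "btr h (DU n) = CU n"
| "btr h (DPi A B) = CPi (btr h A) (btr h B)"
| "btr h (DApp M N) = CApp (btr h M) (btr h N)"
| "btr h (DLab l Ms) = h l (map (btr h) Ms)"

text \<open>Label case: (l{Ms})\<degree> = \<lambda>x:A\<degree>[Ms\<degree>/xs]. L\<degree>[Ms\<degree>/xs], where A and L are
  translated relative to the part of \<Delta> preceding the entry of l (the only labels
  they can mention).\<close>
primrec blab :: "lctx \<Rightarrow> nat \<Rightarrow> cterm list \<Rightarrow> cterm" where
  "blab [] l cs = undefined"
| "blab (e # \<Delta>) l cs =
     (case e of (l', As, A, L, B) \<Rightarrow>
        if l = l' then CLam (cpsubst (cinst cs) (btr (blab \<Delta>) A))
                            (cpsubst (cup (cinst cs)) (btr (blab \<Delta>) L))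
        else blab \<Delta> l cs)"

definition bwd :: "lctx \<Rightarrow> dterm \<Rightarrow> cterm" where
  "bwd \<Delta> = btr (blab \<Delta>)"

end

theory Submission
  imports Defs
begin

text \<open>The backward transformation is a homomorphism on every constructor except labels,
  where it instantiates the translated body of the label's entry with the translated
  arguments. Typing guarantees that every label is declared with the right arity and that
  the entry's body is well scoped in its parameter context; for such a body, instantiating
  and then substituting equals instantiating with substituted arguments, which gives the
  label case by induction on the label context. Hence the transformation commutes with
  every parallel substitution, and M[N/x] is one instance.\<close>

definition rup :: "(nat \<Rightarrow> nat) \<Rightarrow> nat \<Rightarrow> nat" where
  "rup r i = (case i of 0 \<Rightarrow> 0 | Suc j \<Rightarrow> Suc (r j))"

fun crename :: "(nat \<Rightarrow> nat) \<Rightarrow> cterm \<Rightarrow> cterm" where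
  "crename r (CVar i) = CVar (r i)"
| "crename r (CU n) = CU n"
| "crename r (CPi A B) = CPi (crename r A) (crename (rup r) B)"
| "crename r (CApp M N) = CApp (crename r M) (crename r N)"
| "crename r (CLam A M) = CLam (crename r A) (crename (rup r) M)"

lemma cup_CVar_comp: "cup (CVar \<circ> r) = CVar \<circ> rup r"
  by (rule ext) (simp add: cup_def rup_def split: nat.split)

lemma crename_eq_cpsubst: "crename r t = cpsubst (CVar \<circ> r) t"
  by (induction t arbitrary: r) (simp_all add: cup_CVar_comp)

lemma rup_shift: "rup (\<lambda>i. if i < k then i else Suc i) = (\<lambda>i. if i < Suc k then i else Suc i)"
  by (rule ext) (simp add: rup_def split: nat.split)

lemma clift_eq_crename: "clift k t = crename (\<lambda>i. if i < k then i else Suc i) t"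
  by (induction t arbitrary: k) (simp_all add: rup_shift)

lemma clift_eq_cpsubst: "clift k t = cpsubst (\<lambda>i. CVar (if i < k then i else Suc i)) t"
  by (simp add: clift_eq_crename crename_eq_cpsubst comp_def)

lemma clift0_eq_crename: "clift 0 t = crename Suc t"
  by (simp add: clift_eq_crename)

lemma rup_comp: "rup r \<circ> rup r' = rup (r \<circ> r')"
  by (rule ext) (simp add: rup_def split: nat.split)

lemma crename_crename: "crename r (crename r' t) = crename (r \<circ> r') t"
  by (induction t arbitrary: r r') (simp_all add: rup_comp)

lemma cup_comp_rup: "cup \<sigma> \<circ> rup r = cup (\<sigma> \<circ> r)"
  by (rule ext) (simp add: cup_def rup_def split: nat.split)

lemma cpsubst_crename: "cpsubst \<sigma> (crename r t) = cpsubst (\<sigma> \<circ> r) t"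
  by (induction t arbitrary: \<sigma> r) (simp_all add: cup_comp_rup)

lemma crename_comp_cup: "crename (rup r) \<circ> cup \<sigma> = cup (crename r \<circ> \<sigma>)"
  by (rule ext) (simp add: cup_def rup_def clift0_eq_crename crename_crename comp_def split: nat.split)

lemma crename_cpsubst: "crename r (cpsubst \<sigma> t) = cpsubst (crename r \<circ> \<sigma>) t"
  by (induction t arbitrary: \<sigma> r) (simp_all add: crename_comp_cup)

lemma cpsubst_cup_clift0: "cpsubst (cup \<tau>) (clift 0 t) = clift 0 (cpsubst \<tau> t)"
proof -
  have "cup \<tau> \<circ> Suc = crename Suc \<circ> \<tau>"
    by (rule ext) (simp add: cup_def clift0_eq_crename)
  then show ?thesis
    by (simp add: clift0_eq_crename cpsubst_crename crename_cpsubst)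
qed

lemma cpsubst_cup_comp_cup: "cpsubst (cup \<tau>) \<circ> cup \<sigma> = cup (cpsubst \<tau> \<circ> \<sigma>)"
  by (rule ext) (simp add: cup_def cpsubst_cup_clift0 split: nat.split)

lemma cpsubst_cpsubst: "cpsubst \<tau> (cpsubst \<sigma> t) = cpsubst (cpsubst \<tau> \<circ> \<sigma>) t"
  by (induction t arbitrary: \<sigma> \<tau>) (simp_all add: cpsubst_cup_comp_cup)

fun cclosed :: "nat \<Rightarrow> cterm \<Rightarrow> bool" where
  "cclosed n (CVar i) = (i < n)"
| "cclosed n (CU k) = True"
| "cclosed n (CPi A B) = (cclosed n A \<and> cclosed (Suc n) B)"
| "cclosed n (CApp M N) = (cclosed n M \<and> cclosed n N)"
| "cclosed n (CLam A M) = (cclosed n A \<and> cclosed (Suc n) M)"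

lemma cup_cong: "(\<And>i. i < n \<Longrightarrow> \<sigma> i = \<sigma>' i) \<Longrightarrow> i < Suc n \<Longrightarrow> cup \<sigma> i = cup \<sigma>' i"
  by (simp add: cup_def split: nat.split)

lemma cpsubst_cong:
  "cclosed n t \<Longrightarrow> (\<And>i. i < n \<Longrightarrow> \<sigma> i = \<sigma>' i) \<Longrightarrow> cpsubst \<sigma> t = cpsubst \<sigma>' t"
proof (induction t arbitrary: n \<sigma> \<sigma>')
  case (CPi A B)
  then show ?case by simp (metis cup_cong)
next
  case (CApp M N)
  then show ?case by simp (metis)
next
  case (CLam A M)
  then show ?case by simp (metis cup_cong)
qed simp_all

lemma cclosed_clift: "cclosed m t \<Longrightarrow> cclosed (Suc m) (clift k t)"
  by (induction t arbitrary: m k) auto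

lemma cclosed_cup: "(\<And>i. i < n \<Longrightarrow> cclosed m (\<sigma> i)) \<Longrightarrow> i < Suc n \<Longrightarrow> cclosed (Suc m) (cup \<sigma> i)"
  by (auto simp: cup_def cclosed_clift split: nat.split)

lemma cclosed_cpsubst:
  "cclosed n t \<Longrightarrow> (\<And>i. i < n \<Longrightarrow> cclosed m (\<sigma> i)) \<Longrightarrow> cclosed m (cpsubst \<sigma> t)"
proof (induction t arbitrary: n m \<sigma>)
  case (CPi A B)
  then show ?case by simp (metis cclosed_cup)
next
  case (CApp M N)
  then show ?case by simp (metis)
next
  case (CLam A M)
  then show ?case by simp (metis cclosed_cup)
qed simp_all

lemma cpsubst_cpsubst_cclosed:
  assumes "cclosed n t" and "\<And>i. i < n \<Longrightarrow> \<sigma>' i = cpsubst \<tau> (\<sigma> i)"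
  shows "cpsubst \<tau> (cpsubst \<sigma> t) = cpsubst \<sigma>' t"
  using cpsubst_cong[OF assms(1), of "cpsubst \<tau> \<circ> \<sigma>" \<sigma>'] assms(2)
  by (simp add: cpsubst_cpsubst)

lemma cclosed_cinst: "\<forall>c\<in>set cs. cclosed m c \<Longrightarrow> i < length cs \<Longrightarrow> cclosed m (cinst cs i)"
  by (simp add: cinst_def) (metis length_rev nth_mem set_rev)

lemma cinst_map_cpsubst: "i < length cs \<Longrightarrow> cinst (map (cpsubst \<tau>) cs) i = cpsubst \<tau> (cinst cs i)"
  by (simp add: cinst_def rev_map)

definition declares :: "lctx \<Rightarrow> nat \<Rightarrow> nat \<Rightarrow> bool" where
  "declares \<Delta> l n \<longleftrightarrow> (\<exists>As A L B. (l, As, A, L, B) \<in> set \<Delta> \<and> length As = n)"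

text \<open>Needed because \<^const>\<open>blab\<close> of an undeclared label is \<^const>\<open>undefined\<close>,
  which does not commute with substitution.\<close>

fun labels_declared :: "lctx \<Rightarrow> dterm \<Rightarrow> bool" where
  "labels_declared \<Delta> (DVar i) = True"
| "labels_declared \<Delta> (DU k) = True"
| "labels_declared \<Delta> (DPi A B) = (labels_declared \<Delta> A \<and> labels_declared \<Delta> B)"
| "labels_declared \<Delta> (DApp M N) = (labels_declared \<Delta> M \<and> labels_declared \<Delta> N)"
| "labels_declared \<Delta> (DLab l Ms) =
     (declares \<Delta> l (length Ms) \<and> (\<forall>M\<in>set Ms. labels_declared \<Delta> M))"

fun dclosed :: "nat \<Rightarrow> dterm \<Rightarrow> bool" where
  "dclosed n (DVar i) = (i < n)"
| "dclosed n (DU k) = True"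
| "dclosed n (DPi A B) = (dclosed n A \<and> dclosed (Suc n) B)"
| "dclosed n (DApp M N) = (dclosed n M \<and> dclosed n N)"
| "dclosed n (DLab l Ms) = (\<forall>M\<in>set Ms. dclosed n M)"

lemma labels_declared_dlift: "labels_declared \<Delta> (dlift k M) = labels_declared \<Delta> M"
  by (induction M arbitrary: k) auto

lemma labels_declared_dup:
  "(\<And>i. labels_declared \<Delta> (\<sigma> i)) \<Longrightarrow> labels_declared \<Delta> (dup \<sigma> i)"
  by (simp add: dup_def labels_declared_dlift split: nat.split)

lemma hastype_wf:
  "wfC \<Delta> \<Gamma> \<Longrightarrow> wfL \<Delta>"
  "hastype \<Delta> \<Gamma> M T \<Longrightarrow> wfC \<Delta> \<Gamma> \<and> wfL \<Delta> \<and> labels_declared \<Delta> M \<and> dclosed (length \<Gamma>) M"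
proof (induction rule: wfL_wfC_hastype.inducts(2,3))
  case (t_lab \<Delta> \<Gamma> l As A L B Ms)
  then have "declares \<Delta> l (length Ms)"
    by (auto simp: declares_def)
  with t_lab show ?case
    by (auto simp: in_set_conv_nth)
qed auto

lemma wfL_ConsD:
  assumes "wfL ((l, As, A, L, B) # \<Delta>)"
  shows "wfL \<Delta>" and "l \<notin> labels \<Delta>"
    and "labels_declared \<Delta> A" and "dclosed (length As) A"
    and "labels_declared \<Delta> L" and "dclosed (Suc (length As)) L"
proof -
  from assms have wf: "wfL \<Delta>" "l \<notin> labels \<Delta>" and L: "hastype \<Delta> (A # rev As) L B"
    by (auto elim: wfL.cases)
  from hastype_wf(2)[OF L] obtain i where "hastype \<Delta> (rev As) A (DU i)"
    by (auto elim: wfC.cases)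
  with hastype_wf(2)[OF L] hastype_wf(2)[OF this] wf
  show "wfL \<Delta>" "l \<notin> labels \<Delta>" "labels_declared \<Delta> A" "dclosed (length As) A"
      "labels_declared \<Delta> L" "dclosed (Suc (length As)) L"
    by simp_all
qed

lemma btr_cclosed:
  assumes "\<And>l cs m. declares \<Delta> l (length cs) \<Longrightarrow> \<forall>c\<in>set cs. cclosed m c \<Longrightarrow> cclosed m (h l cs)"
  shows "labels_declared \<Delta> M \<Longrightarrow> dclosed m M \<Longrightarrow> cclosed m (btr h M)"
proof (induction M arbitrary: m)
  case (DLab l Ms)
  then show ?case by (auto intro!: assms)
qed auto

context
  fixes \<Delta> :: lctx and h :: "nat \<Rightarrow> cterm list \<Rightarrow> cterm"
  assumes h_cpsubst:
    "\<And>l cs \<tau>. declares \<Delta> l (length cs) \<Longrightarrow> h l (map (cpsubst \<tau>) cs) = cpsubst \<tau> (h l cs)"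
begin

lemma btr_dlift: "labels_declared \<Delta> M \<Longrightarrow> btr h (dlift k M) = clift k (btr h M)"
proof (induction M arbitrary: k)
  case (DLab l Ms)
  let ?\<rho> = "\<lambda>i. CVar (if i < k then i else Suc i)"
  have "btr h (dlift k (DLab l Ms)) = h l (map (cpsubst ?\<rho>) (map (btr h) Ms))"
    using DLab by (simp add: clift_eq_cpsubst cong: map_cong)
  also have "\<dots> = cpsubst ?\<rho> (h l (map (btr h) Ms))"
    using DLab.prems h_cpsubst[of l "map (btr h) Ms"] by simp
  finally show ?case
    by (simp add: clift_eq_cpsubst)
qed auto

lemma btr_dup:
  "(\<And>i. labels_declared \<Delta> (\<sigma> i)) \<Longrightarrow> btr h (dup \<sigma> i) = cup (btr h \<circ> \<sigma>) i"
  by (simp add: dup_def cup_def btr_dlift split: nat.split)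

lemma btr_dpsubst:
  "labels_declared \<Delta> M \<Longrightarrow> (\<And>i. labels_declared \<Delta> (\<sigma> i)) \<Longrightarrow>
   btr h (dpsubst \<sigma> M) = cpsubst (btr h \<circ> \<sigma>) (btr h M)"
proof (induction M arbitrary: \<sigma>)
  case (DPi A B)
  then show ?case by (simp add: btr_dup labels_declared_dup comp_def)
next
  case (DLab l Ms)
  have "btr h (dpsubst \<sigma> (DLab l Ms)) = h l (map (cpsubst (btr h \<circ> \<sigma>)) (map (btr h) Ms))"
    using DLab by (simp add: comp_def cong: map_cong)
  also have "\<dots> = cpsubst (btr h \<circ> \<sigma>) (h l (map (btr h) Ms))"
    using DLab.prems h_cpsubst[of l "map (btr h) Ms"] by simp
  finally show ?case
    by (simp add: comp_def)
qed auto

end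

text \<open>Closedness matters: beyond the parameters, \<^const>\<open>cinst\<close> yields bare variables,
  on which \<open>\<tau>\<close> would act differently on the two sides.\<close>

lemma cpsubst_cinst_cpsubst:
  "cclosed (length cs) t \<Longrightarrow>
   cpsubst \<tau> (cpsubst (cinst cs) t) = cpsubst (cinst (map (cpsubst \<tau>) cs)) t"
  by (rule cpsubst_cpsubst_cclosed[of "length cs"]) (simp_all add: cinst_map_cpsubst)

lemma cpsubst_cup_cinst_cpsubst:
  "cclosed (Suc (length cs)) t \<Longrightarrow>
   cpsubst (cup \<tau>) (cpsubst (cup (cinst cs)) t) = cpsubst (cup (cinst (map (cpsubst \<tau>) cs))) t"
  by (rule cpsubst_cpsubst_cclosed[of "Suc (length cs)"])
    (auto simp: cup_def cinst_map_cpsubst cpsubst_cup_clift0 split: nat.split)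

lemma declares_Cons:
  "declares ((l', As, A, L, B) # \<Delta>) l n \<longleftrightarrow> l = l' \<and> length As = n \<or> declares \<Delta> l n"
  by (auto simp: declares_def)

lemma not_declares_fresh: "l \<notin> labels \<Delta> \<Longrightarrow> \<not> declares \<Delta> l n"
  by (force simp: declares_def labels_def)

lemma blab_cclosed:
  "wfL \<Delta> \<Longrightarrow> declares \<Delta> l (length cs) \<Longrightarrow> \<forall>c\<in>set cs. cclosed m c \<Longrightarrow> cclosed m (blab \<Delta> l cs)"
proof (induction \<Delta> arbitrary: l cs m)
  case Nil
  then show ?case by (simp add: declares_def)
next
  case (Cons e \<Delta>)
  obtain l' As A L B where e: "e = (l', As, A, L, B)"
    by (cases e)
  note wf = wfL_ConsD[OF Cons.prems(1)[unfolded e]]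
  show ?case
  proof (cases "l = l'")
    case True
    with Cons.prems(2) wf(2) have n: "length cs = length As"
      by (auto simp: e declares_Cons not_declares_fresh)
    have "cclosed (length As) (btr (blab \<Delta>) A)" "cclosed (Suc (length As)) (btr (blab \<Delta>) L)"
      using wf by (auto intro: btr_cclosed Cons.IH)
    with True n Cons.prems(3) show ?thesis
      by (auto simp: e intro!: cclosed_cpsubst cclosed_cinst cclosed_cup)
  next
    case False
    with Cons wf(1) show ?thesis
      by (simp add: e declares_Cons)
  qed
qed

lemma blab_cpsubst:
  "wfL \<Delta> \<Longrightarrow> declares \<Delta> l (length cs) \<Longrightarrow>
   blab \<Delta> l (map (cpsubst \<tau>) cs) = cpsubst \<tau> (blab \<Delta> l cs)"
proof (induction \<Delta>)
  case Nil
  then show ?case by (simp add: declares_def)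
next
  case (Cons e \<Delta>)
  obtain l' As A L B where e: "e = (l', As, A, L, B)"
    by (cases e)
  note wf = wfL_ConsD[OF Cons.prems(1)[unfolded e]]
  show ?case
  proof (cases "l = l'")
    case True
    with Cons.prems(2) wf(2) have n: "length cs = length As"
      by (auto simp: e declares_Cons not_declares_fresh)
    have "cclosed (length As) (btr (blab \<Delta>) A)" "cclosed (Suc (length As)) (btr (blab \<Delta>) L)"
      using wf by (auto intro: btr_cclosed blab_cclosed)
    with True n show ?thesis
      by (simp add: e cpsubst_cinst_cpsubst cpsubst_cup_cinst_cpsubst)
  next
    case False
    with Cons wf(1) show ?thesis
      by (simp add: e declares_Cons)
  qed
qed

lemma bwd_dpsubst:
  "wfL \<Delta> \<Longrightarrow> labels_declared \<Delta> M \<Longrightarrow> (\<And>i. labels_declared \<Delta> (\<sigma> i)) \<Longrightarrow>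
   bwd \<Delta> (dpsubst \<sigma> M) = cpsubst (bwd \<Delta> \<circ> \<sigma>) (bwd \<Delta> M)"
  unfolding bwd_def by (rule btr_dpsubst) (auto intro: blab_cpsubst)

theorem lemma3p19:
  assumes "hastype \<Delta> (A # \<Gamma>) M B"
    and "hastype \<Delta> \<Gamma> N A"
  shows "bwd \<Delta> (dsubst0 M N) = csubst0 (bwd \<Delta> M) (bwd \<Delta> N)"
proof -
  from hastype_wf(2)[OF assms(1)] have wf: "wfL \<Delta>" and M: "labels_declared \<Delta> M"
    by simp_all
  from hastype_wf(2)[OF assms(2)] have N: "labels_declared \<Delta> N"
    by simp
  let ?\<sigma> = "\<lambda>i. case i of 0 \<Rightarrow> N | Suc j \<Rightarrow> DVar j"
  have "bwd \<Delta> (dsubst0 M N) = cpsubst (bwd \<Delta> \<circ> ?\<sigma>) (bwd \<Delta> M)"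
    unfolding dsubst0_def using wf M N by (intro bwd_dpsubst) (simp_all split: nat.split)
  also have "bwd \<Delta> \<circ> ?\<sigma> = (\<lambda>i. case i of 0 \<Rightarrow> bwd \<Delta> N | Suc j \<Rightarrow> CVar j)"
    by (rule ext) (simp add: bwd_def split: nat.split)
  finally show ?thesis
    by (simp add: csubst0_def)
qed

end
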